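(* Let $s$ be an integer with $|s|\ge 3$, and let $F_s(t)= t^4 + (4s^3 - 4s^2 + 8s - 4)t^3 + (-6s^2 - 6)t^2 + 4t + 1$. Then $F_s$ has four real roots $r_1,r_2,r_3,r_4$ satisfying $$r_1=-4s^3+4s^2-8s+4-\tfrac32 s^{-1}-\tfrac32 s^{-2}+\theta_1 s^{-4},\quad 1\le\theta_1\le 2,$$ $$r_2=\frac{1+\sqrt3}{2}s^{-1}+\frac{3+\sqrt3}{6}s^{-2}-\frac{1}{3\sqrt3}s^{-3}+\theta_2 s^{-4},\quad -\tfrac32\le\theta_2\le-\tfrac12,$$ $$r_3=\tfrac12 s^{-1}+\tfrac12 s^{-2}-\theta_3 s^{-4},\quad 0\le\theta_3\le 1,$$ $$r_4=\frac{1-\sqrt3}{2}s^{-1}+\frac{3-\sqrt3}{6}s^{-2}+\frac{1}{3\sqrt3}s^{-3}+\theta_4 s^{-4},\quad -\tfrac12\le\theta_4\le\tfrac12,$$ for suitable real numbers $\theta_1,\theta_2,\theta_3,\theta_4$ (depending on $s$). *)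

theory Defs
  imports Complex_Main
begin

definition F :: "int \<Rightarrow> real \<Rightarrow> real" where
  "F s t = t^4 + (4*real_of_int s^3 - 4*real_of_int s^2 + 8*real_of_int s - 4) * t^3
           + (-6*real_of_int s^2 - 6) * t^2 + 4*t + 1"

end

theory Submission
  imports Defs
begin

text \<open>
  With \<open>x = 1/s\<close> and \<open>t = x u\<close>, the equation \<open>F s t = 0\<close> becomes \<open>F_recip x u = 0\<close>, a polynomial
  in \<open>x\<close> and \<open>u\<close>. For each of the three small roots, the claimed expansion
  \<open>t = x u(x) + \<theta> x\<^sup>4\<close> makes \<open>F_recip\<close> vanish to order \<open>x\<^sup>3\<close>, and at the two ends of a short
  \<open>\<theta>\<close>-interval the cofactor, a polynomial in \<open>x\<close> with coefficients in \<open>\<rat>(\<surd>3)\<close>, has opposite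
  signs for all \<open>|x| \<le> 1/3\<close>; this is certified by exact interval evaluation in Horner form.
  The intermediate value theorem then yields three roots, which are distinct because their
  leading terms differ, and the fourth root is read off from the sum of the roots.
\<close>

fun horner :: "real list \<Rightarrow> real \<Rightarrow> real" where
  "horner [] x = 0"
| "horner (c # cs) x = c + x * horner cs x"

lemma horner_append: "horner (cs @ ds) x = horner cs x + x ^ length cs * horner ds x"
  by (induction cs) (auto simp: algebra_simps)

lemma mult_between_endpoints:
  fixes a b x v :: real
  assumes "a \<le> x" "x \<le> b"
  shows "min (a*v) (b*v) \<le> x * v \<and> x * v \<le> max (a*v) (b*v)"
proof (cases "0 \<le> v")
  case True
  then have "a * v \<le> x * v" "x * v \<le> b * v" using assms by (simp_all add: mult_right_mono)
  then show ?thesis by linarith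
next
  case False
  then have "b * v \<le> x * v" "x * v \<le> a * v" using assms by (simp_all add: mult_right_mono_neg)
  then show ?thesis by linarith
qed

lemma mult_mem_interval:
  fixes x v a b l u :: real
  assumes "a \<le> x" "x \<le> b" "l \<le> v" "v \<le> u"
  shows "min (min (a*l) (a*u)) (min (b*l) (b*u)) \<le> x * v \<and> x * v \<le> max (max (a*l) (a*u)) (max (b*l) (b*u))"
  using mult_between_endpoints[OF assms(1,2), of v] mult_between_endpoints[OF assms(3,4), of a]
    mult_between_endpoints[OF assms(3,4), of b]
  by (simp add: mult.commute) linarith

fun horner_enclosure :: "real \<times> real \<Rightarrow> (real \<times> real) list \<Rightarrow> real \<times> real" where
  "horner_enclosure X [] = (0, 0)"
| "horner_enclosure (a, b) ((l, u) # bs) =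
     (case horner_enclosure (a, b) bs of (L, U) \<Rightarrow>
        (l + min (min (a*L) (a*U)) (min (b*L) (b*U)), u + max (max (a*L) (a*U)) (max (b*L) (b*U))))"

definition in_interval :: "real \<Rightarrow> real \<times> real \<Rightarrow> bool" where
  "in_interval c I \<longleftrightarrow> fst I \<le> c \<and> c \<le> snd I"

lemma horner_in_enclosure:
  assumes "list_all2 in_interval cs bs" "a \<le> x" "x \<le> b"
  shows "in_interval (horner cs x) (horner_enclosure (a, b) bs)"
  using assms(1)
proof (induction rule: list_all2_induct)
  case Nil
  then show ?case by (simp add: in_interval_def)
next
  case (Cons c cs I bs)
  obtain L U where LU: "horner_enclosure (a, b) bs = (L, U)" by fastforce
  have "L \<le> horner cs x" "horner cs x \<le> U" using Cons.IH by (simp_all add: LU in_interval_def)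
  from mult_mem_interval[OF assms(2,3) this] show ?case
    using Cons.hyps by (cases I) (simp add: LU in_interval_def)
qed

text \<open>Splitting at \<open>0\<close> lets the interval Horner scheme exploit the sign of \<open>x\<close>; a single
  enclosure over \<open>[-1/3, 1/3]\<close> is far too wide for the sign checks below.\<close>

definition positive_on_third :: "(real \<times> real) list \<Rightarrow> bool" where
  "positive_on_third bs \<longleftrightarrow>
     0 < fst (horner_enclosure (-1/3, 0) bs) \<and> 0 < fst (horner_enclosure (0, 1/3) bs)"

lemma horner_pos_on_third:
  assumes "list_all2 in_interval cs bs" "positive_on_third bs" "\<bar>x\<bar> \<le> 1/3"
  shows "0 < horner cs x"
proof (cases "x \<le> 0")
  case True
  with horner_in_enclosure[OF assms(1), of "-1/3" x 0] assms(2,3) show ?thesis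
    by (auto simp: positive_on_third_def in_interval_def)
next
  case False
  with horner_in_enclosure[OF assms(1), of 0 x "1/3"] assms(2,3) show ?thesis
    by (auto simp: positive_on_third_def in_interval_def)
qed

text \<open>A list of pairs \<open>(a, b)\<close> encodes the polynomial \<open>\<Sum>\<^sub>i (a\<^sub>i + b\<^sub>i \<surd>3) x\<^sup>i\<close>.\<close>

fun qval :: "real \<times> real \<Rightarrow> real" where
  "qval (a, b) = a + b * sqrt 3"

fun qmul :: "real \<times> real \<Rightarrow> real \<times> real \<Rightarrow> real \<times> real" where
  "qmul (a, b) (c, d) = (a*c + 3*(b*d), a*d + b*c)"

fun padd :: "(real \<times> real) list \<Rightarrow> (real \<times> real) list \<Rightarrow> (real \<times> real) list" where
  "padd [] q = q"
| "padd p [] = p"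
| "padd ((a, b) # p) ((c, d) # q) = (a + c, b + d) # padd p q"

fun pmul :: "(real \<times> real) list \<Rightarrow> (real \<times> real) list \<Rightarrow> (real \<times> real) list" where
  "pmul [] q = []"
| "pmul (c # p) q = padd (map (qmul c) q) ((0, 0) # pmul p q)"

definition qeval :: "(real \<times> real) list \<Rightarrow> real \<Rightarrow> real" where
  "qeval p x = horner (map qval p) x"

lemma qval_qmul: "qval (qmul c d) = qval c * qval d"
  by (cases c; cases d) (simp add: algebra_simps)

lemma qeval_Nil [simp]: "qeval [] x = 0"
  and qeval_Cons [simp]: "qeval (c # p) x = qval c + x * qeval p x"
  by (simp_all add: qeval_def)

lemma qeval_padd: "qeval (padd p q) x = qeval p x + qeval q x"
  by (induction p q rule: padd.induct) (auto simp: algebra_simps)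

lemma qeval_map_qmul: "qeval (map (qmul c) p) x = qval c * qeval p x"
  by (induction p) (auto simp: qval_qmul algebra_simps)

lemma qeval_pmul: "qeval (pmul p q) x = qeval p x * qeval q x"
  by (induction p) (auto simp: qeval_padd qeval_map_qmul algebra_simps)

lemma qeval_replicate_zero [simp]: "qeval (replicate n (0, 0)) x = 0"
  by (induction n) simp_all

lemma qeval_append: "qeval (p @ q) x = qeval p x + x ^ length p * qeval q x"
  by (simp add: qeval_def horner_append)

fun qenclose :: "real \<times> real \<Rightarrow> real \<times> real" where
  "qenclose (a, b) = (a + min (b * 1732/1000) (b * 17321/10000), a + max (b * 1732/1000) (b * 17321/10000))"

lemma sqrt3_bounds: "1732/1000 \<le> sqrt (3::real)" "sqrt (3::real) \<le> 17321/10000"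
  by (rule real_le_rsqrt real_le_lsqrt; simp add: power2_eq_square)+

lemma qval_in_qenclose: "in_interval (qval c) (qenclose c)"
proof (cases c)
  case (Pair a b)
  from mult_between_endpoints[OF sqrt3_bounds, of b] show ?thesis
    by (simp add: Pair in_interval_def mult.commute)
qed

lemma monic_quartic_factor_three_roots:
  fixes a3 a2 a1 a0 p q r t :: "'a :: idom"
  assumes "p^4 + a3*p^3 + a2*p^2 + a1*p + a0 = 0"
    and "q^4 + a3*q^3 + a2*q^2 + a1*q + a0 = 0"
    and "r^4 + a3*r^3 + a2*r^2 + a1*r + a0 = 0"
    and "p \<noteq> q" "p \<noteq> r" "q \<noteq> r"
  shows "t^4 + a3*t^3 + a2*t^2 + a1*t + a0 = (t - (- a3 - p - q - r)) * (t - p) * (t - q) * (t - r)"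
proof -
  define b2 b1 where "b2 = a3 + p" and "b1 = a2 + a3*p + p^2"
  define b0 where "b0 = a1 + a2*p + a3*p^2 + p^3"
  have quartic: "y^4 + a3*y^3 + a2*y^2 + a1*y + a0 = (y - p) * (y^3 + b2*y^2 + b1*y + b0)" for y
    using assms(1) unfolding b2_def b1_def b0_def by algebra
  have cubic_q: "q^3 + b2*q^2 + b1*q + b0 = 0" and cubic_r: "r^3 + b2*r^2 + b1*r + b0 = 0"
    using quartic[of q] quartic[of r] assms by auto
  define c1 c0 where "c1 = b2 + q" and "c0 = b1 + b2*q + q^2"
  have cubic: "y^3 + b2*y^2 + b1*y + b0 = (y - q) * (y^2 + c1*y + c0)" for y
    using cubic_q unfolding c1_def c0_def by algebra
  have "r^2 + c1*r + c0 = 0"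
    using cubic[of r] cubic_r assms(6) by simp
  then have quadratic: "y^2 + c1*y + c0 = (y - r) * (y - (- a3 - p - q - r))" for y
    unfolding c1_def b2_def by algebra
  show ?thesis
    unfolding quartic cubic quadratic by (simp add: mult_ac)
qed

lemma IVT_sign_change:
  fixes g :: "real \<Rightarrow> real"
  assumes "a \<le> b" "continuous_on {a..b} g" "g a * g b \<le> 0"
  obtains t where "a \<le> t" "t \<le> b" "g t = 0"
proof -
  have "g a \<le> 0 \<and> 0 \<le> g b \<or> 0 \<le> g a \<and> g b \<le> 0"
    using assms(3) by (auto simp: mult_le_0_iff)
  then show ?thesis
    using IVT'[of g a 0 b] IVT2'[of g b 0 a] assms(1,2) that by blast
qed

definition F_recip :: "real \<Rightarrow> real \<Rightarrow> real" where
  "F_recip x u = x^4*u^4 + (4 - 4*x + 8*x^2 - 4*x^3)*u^3 - (6 + 6*x^2)*u^2 + 4*x*u + 1"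

lemma F_eq_F_recip:
  assumes "real_of_int s * x = 1"
  shows "F s (x * u) = F_recip x u"
  using assms unfolding F_def F_recip_def by algebra

definition F_recip_poly :: "(real \<times> real) list \<Rightarrow> (real \<times> real) list" where
  "F_recip_poly u =
     (let u2 = pmul u u; u3 = pmul u2 u; u4 = pmul u3 u in
      padd (pmul [(0,0), (0,0), (0,0), (0,0), (1,0)] u4)
       (padd (pmul [(4,0), (-4,0), (8,0), (-4,0)] u3)
        (padd (pmul [(-6,0), (0,0), (-6,0)] u2)
         (padd (pmul [(0,0), (4,0)] u) [(1,0)]))))"

lemma qeval_F_recip_poly: "qeval (F_recip_poly u) x = F_recip x (qeval u x)"
  unfolding F_recip_poly_def Let_def qeval_padd qeval_pmul
  by (simp add: F_recip_def algebra_simps power2_eq_square power3_eq_cube power4_eq_xxxx)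

definition F_recip_sign :: "real \<Rightarrow> (real \<times> real) list \<Rightarrow> bool" where
  "F_recip_sign \<sigma> u \<longleftrightarrow>
     take 3 (F_recip_poly u) = replicate 3 (0, 0) \<and>
     positive_on_third (map qenclose (map (qmul (\<sigma>, 0)) (drop 3 (F_recip_poly u))))"

lemma F_recip_sign_imp_factor:
  assumes "F_recip_sign \<sigma> u" "\<bar>x\<bar> \<le> 1/3"
  obtains p where "F_recip x (qeval u x) = x^3 * p" "0 < \<sigma> * p"
proof
  define q where "q = drop 3 (F_recip_poly u)"
  have "F_recip_poly u = replicate 3 (0, 0) @ q"
    using assms(1) unfolding F_recip_sign_def q_def by (metis append_take_drop_id)
  then show "F_recip x (qeval u x) = x^3 * qeval q x"
    by (metis qeval_F_recip_poly qeval_append qeval_replicate_zero length_replicate add_0)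
  have "list_all2 in_interval (map qval (map (qmul (\<sigma>, 0)) q)) (map qenclose (map (qmul (\<sigma>, 0)) q))"
    by (simp add: list_all2_map1 list_all2_map2 list_all2_refl qval_in_qenclose)
  from horner_pos_on_third[OF this _ assms(2)] assms(1)
  have "0 < qeval (map (qmul (\<sigma>, 0)) q) x"
    unfolding F_recip_sign_def q_def qeval_def by blast
  then show "0 < \<sigma> * qeval q x"
    by (simp add: qeval_map_qmul)
qed

lemma F_root_between:
  assumes "real_of_int s * x = 1" "\<bar>x\<bar> \<le> 1/3" "a \<le> b" "length u = 3"
    and "F_recip_sign \<sigma> (u @ [(a, 0)])" "F_recip_sign \<tau> (u @ [(b, 0)])" "\<sigma> * \<tau> < 0"
  obtains \<theta> where "a \<le> \<theta>" "\<theta> \<le> b" "F s (x * qeval u x + \<theta> * x^4) = 0"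
proof -
  define g where "g \<theta> = F s (x * qeval u x + \<theta> * x^4)" for \<theta>
  have g_eq: "g \<theta> = F_recip x (qeval (u @ [(\<theta>, 0)]) x)" for \<theta>
  proof -
    have "x * qeval (u @ [(\<theta>, 0)]) x = x * qeval u x + \<theta> * x^4"
      using assms(4) by (simp add: qeval_append algebra_simps eval_nat_numeral)
    then show ?thesis
      unfolding g_def by (metis F_eq_F_recip[OF assms(1)])
  qed
  obtain p q where ga: "g a = x^3 * p" and gb: "g b = x^3 * q"
    and sp: "0 < \<sigma> * p" and sq: "0 < \<tau> * q"
    using F_recip_sign_imp_factor[OF assms(5,2)] F_recip_sign_imp_factor[OF assms(6,2)] g_eq by metis
  from sp sq have "0 < (\<sigma> * p) * (\<tau> * q)"
    by (rule mult_pos_pos)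
  also have "\<dots> = (\<sigma> * \<tau>) * (p * q)"
    by (simp add: ac_simps)
  finally have "0 < (\<sigma> * \<tau>) * (p * q)" .
  with assms(7) have "p * q < 0"
    by (metis mult_nonpos_nonneg less_imp_le not_le)
  moreover have "g a * g b = (p * q) * (x^3)\<^sup>2"
    unfolding ga gb by (simp add: power2_eq_square mult_ac)
  ultimately have "g a * g b \<le> 0"
    by (metis less_imp_le mult_nonpos_nonneg zero_le_power2)
  moreover have "continuous_on {a..b} g"
    unfolding g_def F_def by (intro continuous_intros)
  ultimately obtain \<theta> where "a \<le> \<theta>" "\<theta> \<le> b" "g \<theta> = 0"
    using IVT_sign_change[OF assms(3)] by metis
  then show ?thesis
    using that unfolding g_def by blast
qed

definition root2_expansion :: "real \<Rightarrow> real \<Rightarrow> real" where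
  "root2_expansion x \<theta> = (1 + sqrt 3)/2 * x + (3 + sqrt 3)/6 * x^2 - sqrt 3/9 * x^3 + \<theta> * x^4"

definition root3_expansion :: "real \<Rightarrow> real \<Rightarrow> real" where
  "root3_expansion x \<theta> = 1/2 * x + 1/2 * x^2 + \<theta> * x^4"

definition root4_expansion :: "real \<Rightarrow> real \<Rightarrow> real" where
  "root4_expansion x \<theta> = (1 - sqrt 3)/2 * x + (3 - sqrt 3)/6 * x^2 + sqrt 3/9 * x^3 + \<theta> * x^4"

lemma F_vanishes_at_root2_expansion:
  assumes "real_of_int s * x = 1" "\<bar>x\<bar> \<le> 1/3"
  obtains \<theta> where "-19/25 \<le> \<theta>" "\<theta> \<le> -31/50" "F s (root2_expansion x \<theta>) = 0"
proof -
  let ?u = "[(1/2, 1/2), (1/2, 1/6), (0, -1/9)]"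
  have "F_recip_sign (-1) (?u @ [(-19/25, 0)])" "F_recip_sign 1 (?u @ [(-31/50, 0)])"
    by (simp_all add: F_recip_sign_def F_recip_poly_def positive_on_third_def numeral_3_eq_3)
  from F_root_between[OF assms _ _ this] obtain \<theta> where
    \<theta>: "-19/25 \<le> \<theta>" "\<theta> \<le> -31/50" "F s (x * qeval ?u x + \<theta> * x^4) = 0"
    by auto
  have "x * qeval ?u x + \<theta> * x^4 = root2_expansion x \<theta>"
    by (simp add: root2_expansion_def field_simps power2_eq_square power3_eq_cube)
  with \<theta> show ?thesis
    using that by simp
qed

lemma F_vanishes_at_root3_expansion:
  assumes "real_of_int s * x = 1" "\<bar>x\<bar> \<le> 1/3"
  obtains \<theta> where "-31/50 \<le> \<theta>" "\<theta> \<le> -9/25" "F s (root3_expansion x \<theta>) = 0"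
proof -
  let ?u = "[(1/2, 0), (1/2, 0), (0, 0)]"
  have "F_recip_sign 1 (?u @ [(-31/50, 0)])" "F_recip_sign (-1) (?u @ [(-9/25, 0)])"
    by (simp_all add: F_recip_sign_def F_recip_poly_def positive_on_third_def numeral_3_eq_3)
  from F_root_between[OF assms _ _ this] obtain \<theta> where
    \<theta>: "-31/50 \<le> \<theta>" "\<theta> \<le> -9/25" "F s (x * qeval ?u x + \<theta> * x^4) = 0"
    by auto
  have "x * qeval ?u x + \<theta> * x^4 = root3_expansion x \<theta>"
    by (simp add: root3_expansion_def field_simps power2_eq_square)
  with \<theta> show ?thesis
    using that by simp
qed

lemma F_vanishes_at_root4_expansion:
  assumes "real_of_int s * x = 1" "\<bar>x\<bar> \<le> 1/3"
  obtains \<theta> where "-9/25 \<le> \<theta>" "\<theta> \<le> -9/50" "F s (root4_expansion x \<theta>) = 0"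
proof -
  let ?u = "[(1/2, -1/2), (1/2, -1/6), (0, 1/9)]"
  have "F_recip_sign (-1) (?u @ [(-9/25, 0)])" "F_recip_sign 1 (?u @ [(-9/50, 0)])"
    by (simp_all add: F_recip_sign_def F_recip_poly_def positive_on_third_def numeral_3_eq_3)
  from F_root_between[OF assms _ _ this] obtain \<theta> where
    \<theta>: "-9/25 \<le> \<theta>" "\<theta> \<le> -9/50" "F s (x * qeval ?u x + \<theta> * x^4) = 0"
    by auto
  have "x * qeval ?u x + \<theta> * x^4 = root4_expansion x \<theta>"
    by (simp add: root4_expansion_def field_simps power2_eq_square power3_eq_cube)
  with \<theta> show ?thesis
    using that by simp
qed

lemma expansion_difference_pos:
  fixes x c d :: real
  assumes "\<bar>x\<bar> \<le> 1/3" "1/2 \<le> c" "\<bar>d\<bar> \<le> 1"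
  shows "0 < c * (1 + x/3 - 2/9 * x^2) + d * x^3"
proof -
  have "x^2 \<le> (1/3)^2"
    using assms(1) by (metis abs_ge_zero power2_abs power_mono)
  moreover have "-1/3 \<le> x"
    using assms(1) by linarith
  ultimately have "1/2 \<le> 1 + x/3 - 2/9 * x^2"
    by (simp add: power2_eq_square)
  from mult_mono[OF assms(2) this] assms(2) have leading: "1/4 \<le> c * (1 + x/3 - 2/9 * x^2)"
    by simp
  have "\<bar>d * x^3\<bar> \<le> 1 * (1/3)^3"
    unfolding abs_mult power_abs
    by (rule mult_mono) (use assms(1,3) in \<open>simp_all add: power_mono\<close>)
  then have "- (d * x^3) \<le> 1/27"
    by (simp add: power_divide)
  with leading show ?thesis
    by linarith
qed

lemma root_expansions_distinct:
  assumes "\<bar>x\<bar> \<le> 1/3" "x \<noteq> 0" and "t2 \<in> {-1..0}" "t3 \<in> {-1..0}" "t4 \<in> {-1..0}"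
  shows "root2_expansion x t2 \<noteq> root3_expansion x t3"
    and "root3_expansion x t3 \<noteq> root4_expansion x t4"
    and "root2_expansion x t2 \<noteq> root4_expansion x t4"
proof -
  have "1/2 \<le> sqrt 3 / 2" "1/2 \<le> sqrt (3::real)"
    using real_sqrt_ge_one[of 3] by linarith+
  then have "0 < sqrt 3/2 * (1 + x/3 - 2/9 * x^2) + (t2 - t3) * x^3"
    and "0 < sqrt 3/2 * (1 + x/3 - 2/9 * x^2) + (t3 - t4) * x^3"
    and "0 < sqrt 3 * (1 + x/3 - 2/9 * x^2) + (t2 - t4) * x^3"
    using assms(3-5) by (intro expansion_difference_pos[OF assms(1)]; auto)+
  moreover have "root2_expansion x t2 - root3_expansion x t3
      = x * (sqrt 3/2 * (1 + x/3 - 2/9 * x^2) + (t2 - t3) * x^3)"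
    and "root3_expansion x t3 - root4_expansion x t4
      = x * (sqrt 3/2 * (1 + x/3 - 2/9 * x^2) + (t3 - t4) * x^3)"
    and "root2_expansion x t2 - root4_expansion x t4
      = x * (sqrt 3 * (1 + x/3 - 2/9 * x^2) + (t2 - t4) * x^3)"
    unfolding root2_expansion_def root3_expansion_def root4_expansion_def
    by (simp_all add: field_simps power2_eq_square power3_eq_cube power4_eq_xxxx)
  ultimately show "root2_expansion x t2 \<noteq> root3_expansion x t3"
    and "root3_expansion x t3 \<noteq> root4_expansion x t4"
    and "root2_expansion x t2 \<noteq> root4_expansion x t4"
    using assms(2) by auto
qed

lemma F_factor_three_roots:
  assumes "F s p = 0" "F s q = 0" "F s r = 0" "p \<noteq> q" "q \<noteq> r" "p \<noteq> r"
  shows "F s t = (t - (- (4*real_of_int s^3 - 4*real_of_int s^2 + 8*real_of_int s - 4) - p - q - r))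
    * (t - p) * (t - q) * (t - r)"
  unfolding F_def
  by (rule monic_quartic_factor_three_roots) (use assms in \<open>simp_all add: F_def\<close>)

theorem mainTheorem3:
  fixes s :: int
  assumes "\<bar>s\<bar> \<ge> 3"
  shows "\<exists>r1 r2 r3 r4 \<theta>1 \<theta>2 \<theta>3 \<theta>4 :: real.
    (\<forall>t. F s t = (t - r1) * (t - r2) * (t - r3) * (t - r4)) \<and>
    r1 = -4*real_of_int s^3 + 4*real_of_int s^2 - 8*real_of_int s + 4
         - 3/2 * real_of_int s powi (-1) - 3/2 * real_of_int s powi (-2)
         + \<theta>1 * real_of_int s powi (-4) \<and> 1 \<le> \<theta>1 \<and> \<theta>1 \<le> 2 \<and>
    r2 = (1 + sqrt 3)/2 * real_of_int s powi (-1) + (3 + sqrt 3)/6 * real_of_int s powi (-2)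
         - 1/(3*sqrt 3) * real_of_int s powi (-3) + \<theta>2 * real_of_int s powi (-4) \<and>
         -3/2 \<le> \<theta>2 \<and> \<theta>2 \<le> -1/2 \<and>
    r3 = 1/2 * real_of_int s powi (-1) + 1/2 * real_of_int s powi (-2)
         - \<theta>3 * real_of_int s powi (-4) \<and> 0 \<le> \<theta>3 \<and> \<theta>3 \<le> 1 \<and>
    r4 = (1 - sqrt 3)/2 * real_of_int s powi (-1) + (3 - sqrt 3)/6 * real_of_int s powi (-2)
         + 1/(3*sqrt 3) * real_of_int s powi (-3) + \<theta>4 * real_of_int s powi (-4) \<and>
         -1/2 \<le> \<theta>4 \<and> \<theta>4 \<le> 1/2"
proof -
  define x where "x = 1 / real_of_int s"
  have sx: "real_of_int s * x = 1" and x_ne: "x \<noteq> 0" and x_le: "\<bar>x\<bar> \<le> 1/3"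
    using assms by (auto simp: x_def abs_div field_simps)
  have powi: "real_of_int s powi (-1) = x" "real_of_int s powi (-2) = x^2"
    "real_of_int s powi (-3) = x^3" "real_of_int s powi (-4) = x^4"
    by (simp_all add: x_def power_int_minus power_one_over divide_inverse power_inverse)
  obtain t2 t3 t4 where t2: "-19/25 \<le> t2" "t2 \<le> -31/50" "F s (root2_expansion x t2) = 0"
    and t3: "-31/50 \<le> t3" "t3 \<le> -9/25" "F s (root3_expansion x t3) = 0"
    and t4: "-9/25 \<le> t4" "t4 \<le> -9/50" "F s (root4_expansion x t4) = 0"
    using F_vanishes_at_root2_expansion[OF sx x_le] F_vanishes_at_root3_expansion[OF sx x_le] F_vanishes_at_root4_expansion[OF sx x_le] by metis
  define r1 where "r1 = - (4*real_of_int s^3 - 4*real_of_int s^2 + 8*real_of_int s - 4)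
    - root2_expansion x t2 - root3_expansion x t3 - root4_expansion x t4"
  have factorization: "\<forall>t. F s t = (t - r1) * (t - root2_expansion x t2)
      * (t - root3_expansion x t3) * (t - root4_expansion x t4)"
    unfolding r1_def using t2 t3 t4
    by (intro allI F_factor_three_roots root_expansions_distinct[OF x_le x_ne]) auto
  have inv_sqrt3: "1/(3 * sqrt 3) = sqrt 3 / (9::real)"
    by (simp add: field_simps)
  have e1: "r1 = -4*real_of_int s^3 + 4*real_of_int s^2 - 8*real_of_int s + 4
      - 3/2 * x - 3/2 * x^2 + (- (t2 + t3 + t4)) * x^4"
    unfolding r1_def root2_expansion_def root3_expansion_def root4_expansion_def
    by (simp add: field_simps)
  show ?thesis
    unfolding powi using factorization e1 t2 t3 t4
    by - (rule exI[of _ r1], rule exI[of _ "root2_expansion x t2"], rule exI[of _ "root3_expansion x t3"],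
        rule exI[of _ "root4_expansion x t4"], rule exI[of _ "- (t2 + t3 + t4)"], rule exI[of _ t2],
        rule exI[of _ "- t3"], rule exI[of _ t4], intro conjI,
        (assumption | linarith | simp add: root2_expansion_def root3_expansion_def root4_expansion_def inv_sqrt3)+)
qed

end
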